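(* For every integer $q\ge 12$ there exists a good $\mathcal{SOS}_q(2)$ whose weight is a unit modulo $q$ and whose period is $\frac{(q-2)(q-4)}{2}-3$ if $q\equiv 0\pmod 4$, $\frac{(q-3)(q-5)}{2}-3$ if $q\equiv 1\pmod 4$, $\frac{(q-2)(q-6)}{2}-3$ if $q\equiv 2\pmod 4$, and $\frac{(q-3)(q-7)}{2}-3$ if $q\equiv 3\pmod 4$.
   Context: For a periodic sequence $S=(s_i)$ over $\mathbb{Z}_q$ write $\mathbf{s}_n(i)=(s_i,\ldots,s_{i+n-1})$; $\mathbf{u}^R$ denotes the reverse of a tuple and $-\mathbf{u}$ its termwise negative. An $\mathcal{SOS}_q(n)$ is a periodic sequence of period $m$ over $\mathbb{Z}_q$ such that $\mathbf{s}_n(i)=\mathbf{s}_n(j)$ implies $i\equiv j\pmod m$, and $\mathbf{s}_n(i)\neq\mathbf{s}_n(j)^R$ and $\mathbf{s}_n(i)\neq-\mathbf{s}_n(j)^R$ for all $i,j$. It is good if every run of consecutive $0$ terms has length at most $n-2$ (for $n=2$: no term is $0$). The weight of $S$ is $s_0+\cdots+s_{m-1}$ computed in the integers with terms in $\{0,\ldots,q-1\}$. *)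

theory Defs
  imports Main
begin

text \<open>A periodic sequence over Z_q is a function s :: nat => nat with values in {0..q-1}
  and s (i + m) = s i. The window s_n(i) = (s_i, ..., s_{i+n-1}) is a list.\<close>

definition window :: "(nat \<Rightarrow> nat) \<Rightarrow> nat \<Rightarrow> nat \<Rightarrow> nat list" where
  "window s n i = map (\<lambda>k. s (i + k)) [0..<n]"

definition neg_tuple :: "nat \<Rightarrow> nat list \<Rightarrow> nat list" where
  "neg_tuple q xs = map (\<lambda>x. (q - x) mod q) xs"

definition is_SOS :: "nat \<Rightarrow> nat \<Rightarrow> nat \<Rightarrow> (nat \<Rightarrow> nat) \<Rightarrow> bool" where
  "is_SOS q n m s \<longleftrightarrow>
     0 < m \<and> (\<forall>i. s i < q) \<and> (\<forall>i. s (i + m) = s i) \<and>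
     (\<forall>i j. window s n i = window s n j \<longrightarrow> i mod m = j mod m) \<and>
     (\<forall>i j. window s n i \<noteq> rev (window s n j) \<and>
            window s n i \<noteq> neg_tuple q (rev (window s n j)))"

text \<open>Good: every run of consecutive zeros has length at most n - 2, i.e. there is no
  run of n - 1 consecutive zeros (for n = 2: no term is 0).\<close>
definition good_SOS :: "nat \<Rightarrow> (nat \<Rightarrow> nat) \<Rightarrow> bool" where
  "good_SOS n s \<longleftrightarrow> \<not> (\<exists>i. \<forall>k < n - 1. s (i + k) = 0)"

definition weight :: "nat \<Rightarrow> (nat \<Rightarrow> nat) \<Rightarrow> nat" where
  "weight m s = (\<Sum>i<m. s i)"

end

(*
  Read modulo q, a closed walk P over the integers gives a periodic sequence whose windows of
  length 2 are the arcs (consecutive pairs) of P. The SOS conditions then say: the arcs are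
  distinct, and no arc is congruent to the reverse (d, c) or the negated reverse (-d, -c) of
  an arc (c, d). All letters lie in {z} together with the integers of absolute value at most
  T < z, where z = q div 2; on these, reduction mod q is injective and respects negation,
  except that z = -z mod q when q is even.

  The walk starts from a fixed core with 9 arcs. The layer for k consists of blocks
  k, -i, -k, i (one for each of several i < k), and the previous walk is spliced into the
  block for i = k - 1. The new arcs contain +-k, so they differ from the old ones. Each has the
  sign pattern "a b < 0 iff |a| > |b|". Negation preserves this pattern and reversal destroys
  it, so no two layer arcs clash. Every layer has weight 0, so the weight stays 2 z - 1, which
  is coprime to q.
*)
theory Submission
  imports Defs
begin

definition arcs :: "'a list \<Rightarrow> ('a \<times> 'a) list" where
  "arcs xs = zip xs (tl xs)"

lemma arcs_Nil [simp]: "arcs [] = []"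
  and arcs_singleton [simp]: "arcs [x] = []"
  and arcs_Cons_Cons [simp]: "arcs (x # y # zs) = (x, y) # arcs (y # zs)"
  by (simp_all add: arcs_def)

lemma length_arcs [simp]: "length (arcs xs) = length xs - 1"
  by (simp add: arcs_def)

lemma nth_arcs: "k < length xs - 1 \<Longrightarrow> arcs xs ! k = (xs ! k, xs ! Suc k)"
  by (simp add: arcs_def nth_tl)

lemma arcs_append:
  "xs \<noteq> [] \<Longrightarrow> ys \<noteq> [] \<Longrightarrow> arcs (xs @ ys) = arcs xs @ (last xs, hd ys) # arcs ys"
proof (induction xs rule: induct_list012)
  case (2 x)
  then show ?case by (cases ys) auto
qed simp_all

lemma set_arcs_subset: "(a, b) \<in> set (arcs xs) \<Longrightarrow> a \<in> set xs \<and> b \<in> set xs"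
  unfolding arcs_def by (cases xs) (auto dest: set_zip_leftD set_zip_rightD)

fun arc_clash :: "int \<Rightarrow> int \<times> int \<Rightarrow> int \<times> int \<Rightarrow> bool" where
  "arc_clash q (a, b) (c, d) \<longleftrightarrow>
     (a mod q = d mod q \<and> b mod q = c mod q) \<or> (a mod q = - d mod q \<and> b mod q = - c mod q)"

lemma nat_mod_uminus:
  assumes "0 < q"
  shows "(q - nat (v mod int q)) mod q = nat (- v mod int q)"
proof (cases "v mod int q = 0")
  case False
  have "0 \<le> v mod int q" "v mod int q < int q"
    using assms by simp_all
  with False have "0 < v mod int q" "v mod int q < int q"
    by simp_all
  then show ?thesis by (simp add: zmod_zminus1_eq_if nat_diff_distrib)
qed (simp add: zmod_zminus1_eq_if)

lemma SOS_of_closed_walk: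
  fixes P :: "int list" and q :: nat
  defines "n \<equiv> length P - 1"
  defines "s \<equiv> \<lambda>i. nat (P ! (i mod n) mod int q)"
  assumes q: "0 < q" and len: "2 \<le> length P" and closed: "hd P = last P"
    and dist: "distinct (arcs P)" and inj: "inj_on (\<lambda>v. v mod int q) (set P)"
    and nonzero: "\<forall>v\<in>set P. v mod int q \<noteq> 0"
    and no_clash: "\<forall>x\<in>set (arcs P). \<forall>y\<in>set (arcs P). \<not> arc_clash (int q) x y"
  shows "is_SOS q 2 n s \<and> good_SOS 2 s \<and>
    int (weight n s) mod int q = sum_list (butlast P) mod int q"
proof -
  let ?r = "\<lambda>v. nat (v mod int q)"
  have n: "0 < n" "n < length P" using len by (simp_all add: n_def)
  have wrap: "P ! (Suc i mod n) = P ! Suc (i mod n)" for i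
  proof (cases "Suc (i mod n) < n")
    case True
    then show ?thesis by (simp add: mod_Suc)
  next
    case False
    then have "Suc (i mod n) = n" using n by (metis Suc_lessI mod_less_divisor)
    moreover have "P ! 0 = P ! n"
      using closed n by (metis hd_conv_nth last_conv_nth list.size(3) n_def not_less0)
    ultimately show ?thesis by (simp add: mod_Suc)
  qed
  have arc_at: "arcs P ! (i mod n) = (P ! (i mod n), P ! (Suc i mod n))" for i
  proof -
    have "i mod n < length P - 1" using n by (simp add: n_def)
    then show ?thesis by (simp add: nth_arcs wrap)
  qed
  have arc_in: "arcs P ! (i mod n) \<in> set (arcs P)" for i
    using n by (simp add: n_def)
  have window: "window s 2 i = [?r (P ! (i mod n)), ?r (P ! (Suc i mod n))]" for i
    by (simp add: window_def s_def numeral_2_eq_2)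
  have in_P: "P ! (i mod n) \<in> set P" for i
    using n by (meson mod_less_divisor nth_mem order.strict_trans)
  have r_eq: "?r u = ?r v \<longleftrightarrow> u mod int q = v mod int q" for u v
    using q by (simp add: eq_nat_nat_iff)
  have r_neg: "(q - ?r v) mod q = ?r (- v)" for v
    using q by (rule nat_mod_uminus)
  have window_inj: "window s 2 i = window s 2 j \<Longrightarrow> i mod n = j mod n" for i j
  proof -
    assume "window s 2 i = window s 2 j"
    then have "arcs P ! (i mod n) = arcs P ! (j mod n)"
      using in_P[of i] in_P[of j] in_P[of "Suc i"] in_P[of "Suc j"]
      by (simp add: window arc_at r_eq inj_on_eq_iff[OF inj])
    then show ?thesis
      using dist n by (simp add: nth_eq_iff_index_eq n_def)
  qed
  have window_asym: "window s 2 i \<noteq> rev (window s 2 j) \<and>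
      window s 2 i \<noteq> neg_tuple q (rev (window s 2 j))" for i j
  proof -
    have "\<not> arc_clash (int q) (arcs P ! (i mod n)) (arcs P ! (j mod n))"
      using no_clash arc_in by blast
    then show ?thesis by (simp add: window arc_at r_eq neg_tuple_def r_neg)
  qed
  have range: "s i < q" for i
    using q by (simp add: s_def nat_less_iff)
  have periodic: "s (i + n) = s i" for i
    by (simp add: s_def)
  have "s i \<noteq> 0" for i
  proof -
    have "P ! (i mod n) mod int q \<noteq> 0" by (rule nonzero[rule_format, OF in_P])
    moreover have "0 \<le> P ! (i mod n) mod int q" using q by simp
    ultimately show ?thesis by (simp add: s_def)
  qed
  then have good: "good_SOS 2 s" by (simp add: good_SOS_def)
  have weight: "int (weight n s) mod int q = sum_list (butlast P) mod int q"
  proof -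
    have "int (weight n s) = (\<Sum>i<n. P ! i mod int q)"
      using q by (simp add: weight_def s_def)
    also have "\<dots> mod int q = (\<Sum>i<n. P ! i) mod int q"
      by (rule mod_sum_eq)
    also have "(\<Sum>i<n. P ! i) = sum_list (butlast P)"
      by (simp add: sum_list_sum_nth nth_butlast lessThan_atLeast0 n_def)
    finally show ?thesis .
  qed
  show ?thesis
    using n window_inj window_asym range periodic good weight unfolding is_SOS_def by blast
qed

definition opposite :: "int \<Rightarrow> int \<Rightarrow> int \<Rightarrow> bool" where
  "opposite z u v \<longleftrightarrow> u = - v \<or> u = z \<and> v = z"

fun mirrored :: "int \<Rightarrow> int \<times> int \<Rightarrow> int \<times> int \<Rightarrow> bool" where
  "mirrored z (a, b) (c, d) \<longleftrightarrow> (a = d \<and> b = c) \<or> (opposite z a d \<and> opposite z b c)"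

lemma dvd_abs_less_imp_zero:
  fixes q x :: int
  assumes "q dvd x" and "\<bar>x\<bar> < q"
  shows "x = 0"
proof (rule ccontr)
  assume "x \<noteq> 0"
  then have "\<bar>q\<bar> \<le> \<bar>x\<bar>" using assms(1) by (rule dvd_imp_le_int)
  with assms(2) show False by linarith
qed

lemma mod_eq_imp_eq:
  fixes q z T u v :: int
  assumes "0 \<le> T" "T < z" "2 * z \<le> q" "u = z \<or> \<bar>u\<bar> \<le> T" "v = z \<or> \<bar>v\<bar> \<le> T"
    and "u mod q = v mod q"
  shows "u = v"
proof -
  have "q dvd u - v" using assms(6) by (simp add: mod_eq_dvd_iff)
  moreover have "\<bar>u - v\<bar> < q" using assms(1-5) by auto
  ultimately show ?thesis using dvd_abs_less_imp_zero by fastforce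
qed

lemma mod_eq_neg_imp_opposite:
  fixes q z T u v :: int
  assumes "0 \<le> T" "T < z" "2 * z \<le> q" "u = z \<or> \<bar>u\<bar> \<le> T" "v = z \<or> \<bar>v\<bar> \<le> T"
    and "u mod q = - v mod q"
  shows "opposite z u v"
proof (cases "u = z \<and> v = z")
  case False
  have "q dvd u + v" using assms(6) by (simp add: mod_eq_dvd_iff)
  moreover have "\<bar>u + v\<bar> < q" using assms(1-5) False by auto
  ultimately have "u + v = 0" by (rule dvd_abs_less_imp_zero)
  then show ?thesis by (simp add: opposite_def)
qed (simp add: opposite_def)

lemma arc_clash_imp_mirrored:
  fixes q z T a b c d :: int
  assumes "0 \<le> T" "T < z" "2 * z \<le> q"
    and small: "\<forall>v\<in>{a, b, c, d}. v = z \<or> \<bar>v\<bar> \<le> T"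
    and "arc_clash q (a, b) (c, d)"
  shows "mirrored z (a, b) (c, d)"
proof -
  have "u = v" if "u mod q = v mod q" "u \<in> {a, b, c, d}" "v \<in> {a, b, c, d}" for u v
    using mod_eq_imp_eq[OF assms(1-3) _ _ that(1)] small that(2,3) by blast
  moreover have "opposite z u v"
    if "u mod q = - v mod q" "u \<in> {a, b, c, d}" "v \<in> {a, b, c, d}" for u v
    using mod_eq_neg_imp_opposite[OF assms(1-3) _ _ that(1)] small that(2,3) by blast
  ultimately show ?thesis using assms(5) by auto
qed

definition block :: "int \<Rightarrow> int \<Rightarrow> int list" where
  "block k i = [k, - i, - k, i]"

definition block_arcs :: "int \<Rightarrow> int \<Rightarrow> (int \<times> int) list" where
  "block_arcs k i = [(k, - i), (- i, - k), (- k, i), (i, k)]"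

lemma arcs_concat_blocks:
  "arcs (concat (map (block k) is) @ k # ys) = concat (map (block_arcs k) is) @ arcs (k # ys)"
proof (induction "is")
  case (Cons i "is")
  obtain rest where rest: "concat (map (block k) is) @ k # ys = k # rest"
    by (cases "is") (simp_all add: block_def)
  have "concat (map (block k) (i # is)) @ k # ys = [k, - i, - k, i, k] @ rest"
    using rest by (simp add: block_def[of k i])
  then show ?case
    using Cons.IH rest by (simp add: block_arcs_def[of k i])
qed simp

lemma distinct_concat_block_arcs:
  assumes "distinct is" and "\<forall>i\<in>set is. 0 < i \<and> i < k"
  shows "distinct (concat (map (block_arcs k) is))"
  using assms by (induction "is") (auto simp: block_arcs_def)

definition core :: "int \<Rightarrow> int list" where
  "core z = [3, 1, 2, -1, -2, z, -3, -1, z, 3]"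

definition alphabet :: "int \<Rightarrow> int \<Rightarrow> int set" where
  "alphabet z T = insert z {v. 1 \<le> \<bar>v\<bar> \<and> \<bar>v\<bar> \<le> T}"

text \<open>The tail [k, - (k - 1), - k] @ P @ [k] is the block for i = k - 1, opened at k - 1
  to splice in P.\<close>
definition extend :: "int \<Rightarrow> nat \<Rightarrow> int list \<Rightarrow> int list" where
  "extend k n P = concat (map (block k \<circ> int) [1..<Suc n]) @ [k, - (k - 1), - k] @ P @ [k]"

definition layer_arcs :: "int \<Rightarrow> nat \<Rightarrow> (int \<times> int) list" where
  "layer_arcs k n = concat (map (block_arcs k) (map int [1..<Suc n] @ [k - 1]))"

lemma length_extend: "length (extend k n P) = length P + 4 * n + 4"
proof -
  have "length (concat (map (block k \<circ> int) xs)) = 4 * length xs" for xs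
    by (induction xs) (simp_all add: block_def)
  then show ?thesis by (simp add: extend_def)
qed

lemma hd_extend: "hd (extend k n P) = k"
  by (cases "n = 0") (simp_all add: extend_def block_def upt_conv_Cons del: upt_Suc)

lemma last_extend: "last (extend k n P) = k"
  by (simp add: extend_def)

lemma sum_list_butlast_extend:
  assumes "P \<noteq> []" "last P = k - 1"
  shows "sum_list (butlast (extend k n P)) = sum_list (butlast P)"
proof -
  have blocks: "sum_list (concat (map (block k \<circ> int) xs)) = 0" for xs
    by (induction xs) (simp_all add: block_def)
  have "sum_list P = sum_list (butlast P) + (k - 1)"
    using assms
    by (metis append_butlast_last_id sum_list.Cons sum_list.Nil sum_list_append add_0_right)
  then show ?thesis
    by (simp add: extend_def butlast_append blocks del: upt_Suc)
qed

lemma set_extend_subset: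
  assumes "set P \<subseteq> alphabet z (k - 1)" "int n \<le> k - 2"
  shows "set (extend k n P) \<subseteq> alphabet z k"
  using assms by (auto simp: extend_def block_def alphabet_def)

lemma arcs_extend:
  assumes "P \<noteq> []" "hd P = k - 1" "last P = k - 1"
  shows "set (arcs (extend k n P)) = set (layer_arcs k n) \<union> set (arcs P)"
    and "distinct (arcs (extend k n P)) \<longleftrightarrow> distinct (layer_arcs k n @ arcs P)"
proof -
  have "arcs (- k # P @ [k]) = (- k, k - 1) # arcs P @ [(k - 1, k)]"
    using assms arcs_append[of "[- k]" "P @ [k]"] arcs_append[of P "[k]"] by simp
  then have "arcs (extend k n P) = concat (map (block_arcs k \<circ> int) [1..<Suc n])
      @ [(k, - (k - 1)), (- (k - 1), - k), (- k, k - 1)] @ arcs P @ [(k - 1, k)]"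
    using arcs_concat_blocks[of k "map int [1..<Suc n]"] by (simp add: extend_def)
  then show "set (arcs (extend k n P)) = set (layer_arcs k n) \<union> set (arcs P)"
    and "distinct (arcs (extend k n P)) \<longleftrightarrow> distinct (layer_arcs k n @ arcs P)"
    by (auto simp: layer_arcs_def block_arcs_def)
qed

fun layer_arc :: "int \<Rightarrow> int \<times> int \<Rightarrow> bool" where
  "layer_arc T (a, b) \<longleftrightarrow>
     4 \<le> max \<bar>a\<bar> \<bar>b\<bar> \<and> max \<bar>a\<bar> \<bar>b\<bar> \<le> T \<and>
     \<bar>a\<bar> \<noteq> \<bar>b\<bar> \<and> (a * b < 0 \<longleftrightarrow> \<bar>b\<bar> < \<bar>a\<bar>)"

lemma layer_arc_mono: "layer_arc T x \<Longrightarrow> T \<le> T' \<Longrightarrow> layer_arc T' x"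
  by (cases x) auto

lemma layer_arcs_properties:
  assumes "x \<in> set (layer_arcs k n)" "4 \<le> k" "int n \<le> k - 2"
  shows "layer_arc k x" and "\<bar>fst x\<bar> = k \<or> \<bar>snd x\<bar> = k"
  using assms by (auto simp: layer_arcs_def block_arcs_def mult_less_0_iff zero_less_mult_iff)

lemma distinct_layer_arcs: "int n \<le> k - 2 \<Longrightarrow> distinct (layer_arcs k n)"
  unfolding layer_arcs_def
  by (intro distinct_concat_block_arcs) (auto simp: distinct_map inj_on_def simp del: upt_Suc)

definition admissible :: "int \<Rightarrow> int \<Rightarrow> int list \<Rightarrow> bool" where
  "admissible z T P \<longleftrightarrow> P \<noteq> [] \<and> hd P = T \<and> last P = T \<and> distinct (arcs P) \<and>
     set P \<subseteq> alphabet z T \<and>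
     (\<forall>x\<in>set (arcs P). x \<in> set (arcs (core z)) \<or> layer_arc T x) \<and>
     sum_list (butlast P) = 2 * z - 1"

lemma admissible_core: "3 < z \<Longrightarrow> admissible z 3 (core z)"
  by (auto simp: admissible_def core_def alphabet_def)

lemma admissible_extend:
  assumes adm: "admissible z (k - 1) P" and k: "4 \<le> k" "k < z" and n: "int n \<le> k - 2"
  shows "admissible z k (extend k n P)"
proof -
  from adm have P: "P \<noteq> []" "hd P = k - 1" "last P = k - 1" "distinct (arcs P)"
    "set P \<subseteq> alphabet z (k - 1)"
    "\<forall>x\<in>set (arcs P). x \<in> set (arcs (core z)) \<or> layer_arc (k - 1) x"
    "sum_list (butlast P) = 2 * z - 1"
    unfolding admissible_def by auto
  have "\<bar>fst x\<bar> \<noteq> k \<and> \<bar>snd x\<bar> \<noteq> k" if "x \<in> set (arcs P)" for x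
    using that P(5) k set_arcs_subset[of "fst x" "snd x" P] by (force simp: alphabet_def)
  then have "set (layer_arcs k n) \<inter> set (arcs P) = {}"
    using layer_arcs_properties(2)[OF _ k(1) n] by blast
  then have "distinct (arcs (extend k n P))"
    using arcs_extend(2)[OF P(1-3)] distinct_layer_arcs[OF n] P(4) by simp
  moreover have "\<forall>x\<in>set (arcs (extend k n P)). x \<in> set (arcs (core z)) \<or> layer_arc k x"
    using arcs_extend(1)[OF P(1-3)] P(6) layer_arcs_properties(1)[OF _ k(1) n] layer_arc_mono
    by fastforce
  moreover have "extend k n P \<noteq> []" by (simp add: extend_def)
  ultimately show ?thesis
    using P set_extend_subset[OF P(5) n] sum_list_butlast_extend[OF P(1,3)]
    by (simp add: admissible_def hd_extend last_extend)
qed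

fun walk :: "int \<Rightarrow> nat \<Rightarrow> int list" where
  "walk z 0 = core z"
| "walk z (Suc j) = extend (int j + 4) (j + 2) (walk z j)"

lemma length_walk: "length (walk z j) = 2 * j\<^sup>2 + 10 * j + 10"
  by (induction j) (simp_all add: core_def length_extend power2_eq_square algebra_simps)

lemma admissible_walk: "int j + 3 < z \<Longrightarrow> admissible z (int j + 3) (walk z j)"
proof (induction j)
  case 0
  then show ?case by (simp add: admissible_core)
next
  case (Suc j)
  then have "admissible z (int j + 4 - 1) (walk z j)" by (simp add: ac_simps)
  then have "admissible z (int j + 4) (extend (int j + 4) (j + 2) (walk z j))"
    by (rule admissible_extend) (use Suc.prems in simp_all)
  then show ?case by (simp add: add.commute)
qed

lemma core_arcs_not_mirrored:
  assumes "4 \<le> z" "x \<in> set (arcs (core z))" "y \<in> set (arcs (core z))"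
  shows "\<not> mirrored z x y"
  using assms by (auto simp: core_def opposite_def)

lemma layer_arcs_not_mirrored:
  assumes "T < z" "layer_arc T x" "layer_arc T y"
  shows "\<not> mirrored z x y"
  using assms by (cases x; cases y) (auto simp: opposite_def algebra_simps)

lemma core_layer_arcs_not_mirrored:
  assumes "T < z" "x \<in> set (arcs (core z))" "layer_arc T y"
  shows "\<not> mirrored z x y \<and> \<not> mirrored z y x"
  using assms by (cases y) (auto simp: core_def opposite_def)

lemma admissible_arcs_not_mirrored:
  assumes "admissible z T P" "T < z" "4 \<le> z" "x \<in> set (arcs P)" "y \<in> set (arcs P)"
  shows "\<not> mirrored z x y"
proof -
  have "x \<in> set (arcs (core z)) \<or> layer_arc T x"
    and "y \<in> set (arcs (core z)) \<or> layer_arc T y"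
    using assms(1,4,5) by (auto simp: admissible_def)
  then show ?thesis
    using core_arcs_not_mirrored layer_arcs_not_mirrored core_layer_arcs_not_mirrored assms(2,3)
    by metis
qed

lemma SOS_of_admissible:
  fixes q :: nat and P :: "int list"
  defines "n \<equiv> length P - 1"
  defines "s \<equiv> \<lambda>i. nat (P ! (i mod n) mod int q)"
  assumes adm: "admissible z T P" and T: "0 \<le> T" "T < z" and z: "4 \<le> z" "2 * z \<le> int q"
  shows "is_SOS q 2 n s \<and> good_SOS 2 s \<and> int (weight n s) mod int q = (2 * z - 1) mod int q"
proof -
  have small: "v = z \<or> \<bar>v\<bar> \<le> T" and nonzero: "v \<noteq> 0" if "v \<in> set P" for v
    using that adm z by (auto simp: admissible_def alphabet_def)
  have sum: "sum_list (butlast P) = 2 * z - 1" and closed: "hd P = last P"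
    and dist: "distinct (arcs P)"
    using adm by (simp_all add: admissible_def)
  then have "butlast P \<noteq> []" using z by auto
  then have len: "2 \<le> length P" by (cases P rule: rev_cases) (auto simp: Suc_le_eq)
  have q: "0 < q" using z by linarith
  have inj: "inj_on (\<lambda>v. v mod int q) (set P)"
    using mod_eq_imp_eq[OF T z(2)] small by (auto intro: inj_onI)
  have residue_nonzero: "\<forall>v\<in>set P. v mod int q \<noteq> 0"
    using mod_eq_imp_eq[OF T z(2), of _ 0] small nonzero T by fastforce
  have no_clash: "\<forall>x\<in>set (arcs P). \<forall>y\<in>set (arcs P). \<not> arc_clash (int q) x y"
  proof (intro ballI)
    fix x y assume xy: "x \<in> set (arcs P)" "y \<in> set (arcs P)"
    obtain a b c d where x: "x = (a, b)" and y: "y = (c, d)" by fastforce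
    have "{a, b, c, d} \<subseteq> set P"
      using xy set_arcs_subset unfolding x y by fastforce
    then have "\<forall>v\<in>{a, b, c, d}. v = z \<or> \<bar>v\<bar> \<le> T" using small by blast
    moreover have "\<not> mirrored z (a, b) (c, d)"
      using admissible_arcs_not_mirrored[OF adm T(2) z(1)] xy unfolding x y by blast
    ultimately show "\<not> arc_clash (int q) x y"
      unfolding x y using arc_clash_imp_mirrored[OF T z(2)] by blast
  qed
  show ?thesis
    using SOS_of_closed_walk[OF q len closed dist inj residue_nonzero no_clash] sum
    by (simp add: n_def s_def)
qed

definition SOS_period :: "nat \<Rightarrow> nat" where
  "SOS_period q = (if q mod 4 = 0 then (q - 2) * (q - 4) div 2 - 3
                   else if q mod 4 = 1 then (q - 3) * (q - 5) div 2 - 3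
                   else if q mod 4 = 2 then (q - 2) * (q - 6) div 2 - 3
                   else (q - 3) * (q - 7) div 2 - 3)"

lemma SOS_period_eq:
  assumes "r < 4"
  shows "SOS_period (4 * m + 8 + r) =
    (if r < 2 then 8 * m\<^sup>2 + 20 * m + 9 else 8 * m\<^sup>2 + 24 * m + 13)"
proof -
  \<comment> \<open>factors in the simplifier's normal form, so that they match after unfolding\<close>
  have low: "(6 + 4 * m) * (4 + 4 * m) = 2 * (8 * m\<^sup>2 + 20 * m + 12)"
    and high: "(8 + 4 * m) * (4 + 4 * m) = 2 * (8 * m\<^sup>2 + 24 * m + 16)"
    by (simp_all add: power2_eq_square algebra_simps)
  consider "r = 0" | "r = 1" | "r = 2" | "r = 3" using assms by linarith
  then show ?thesis
    by cases (simp_all add: SOS_period_def low high)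
qed

lemma coprime_double_half_minus_one: "coprime (2 * int (q div 2) - 1) (int q)"
proof -
  let ?a = "2 * int (q div 2) - 1"
  have q: "int q = ?a + (1 + int (q mod 2))" using div_mult_mod_eq[of q 2] by linarith
  have "coprime ?a (1 + int (q mod 2))"
    by (cases "even q") (simp_all add: odd_iff_mod_2_eq_one)
  then show ?thesis
    unfolding coprime_iff_gcd_eq_1 by (subst q) (simp only: gcd_add2)
qed

lemma exists_admissible_of_length:
  fixes q :: nat
  assumes "12 \<le> q"
  shows "\<exists>T P. admissible (int (q div 2)) T P \<and> 0 \<le> T \<and> T < int (q div 2) \<and>
    length P = SOS_period q + 1"
proof -
  define m where "m = q div 4 - 2"
  define r where "r = q mod 4"
  have r: "r < 4" by (simp add: r_def)
  have q: "q = 4 * m + 8 + r"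
    using assms div_mult_mod_eq[of q 4] r unfolding m_def r_def by linarith
  have period: "SOS_period q = (if r < 2 then 8 * m\<^sup>2 + 20 * m + 9 else 8 * m\<^sup>2 + 24 * m + 13)"
    unfolding q by (rule SOS_period_eq[OF r])
  define z where "z = int (q div 2)"
  have z: "z = 2 * int m + 4 + int (r div 2)"
    using r unfolding z_def q by linarith
  have adm: "admissible z (2 * int m + 3) (walk z (2 * m))"
    using admissible_walk[of "2 * m" z] z by simp
  have len: "length (walk z (2 * m)) = 8 * m\<^sup>2 + 20 * m + 10"
    by (simp add: length_walk power2_eq_square)
  have "\<exists>T P. admissible z T P \<and> 0 \<le> T \<and> T < z \<and> length P = SOS_period q + 1"
  proof (cases "r < 2")
    case True
    then show ?thesis
      using adm len z period by (intro exI[of _ "2 * int m + 3"] exI[of _ "walk z (2 * m)"]) simp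
  next
    case False
    define P where "P = extend (2 * int m + 4) m (walk z (2 * m))"
    have "admissible z (2 * int m + 4 - 1) (walk z (2 * m))"
      using adm by (simp add: ac_simps)
    then have "admissible z (2 * int m + 4) P"
      unfolding P_def by (rule admissible_extend) (use False z in simp_all)
    then show ?thesis
      using False len z period
      by (intro exI[of _ "2 * int m + 4"] exI[of _ P]) (simp add: P_def length_extend)
  qed
  then show ?thesis unfolding z_def .
qed

theorem corollary4p11:
  fixes q :: nat
  assumes "q \<ge> 12"
  shows "\<exists>m s. is_SOS q 2 m s \<and> good_SOS 2 s \<and> coprime (weight m s) q \<and>
           m = (if q mod 4 = 0 then (q - 2) * (q - 4) div 2 - 3
                else if q mod 4 = 1 then (q - 3) * (q - 5) div 2 - 3
                else if q mod 4 = 2 then (q - 2) * (q - 6) div 2 - 3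
                else (q - 3) * (q - 7) div 2 - 3)"
proof -
  define z where "z = int (q div 2)"
  obtain T P where adm: "admissible z T P" and T: "0 \<le> T" "T < z"
    and len: "length P = SOS_period q + 1"
    using exists_admissible_of_length[OF assms] unfolding z_def by blast
  have z: "4 \<le> z" "2 * z \<le> int q" using assms by (simp_all add: z_def)
  define s where "s = (\<lambda>i. nat (P ! (i mod SOS_period q) mod int q))"
  have SOS: "is_SOS q 2 (SOS_period q) s" "good_SOS 2 s"
    and weight: "int (weight (SOS_period q) s) mod int q = (2 * z - 1) mod int q"
    using SOS_of_admissible[OF adm T z] len by (simp_all add: s_def)
  have "coprime (int (weight (SOS_period q) s)) (int q)"
    using weight coprime_double_half_minus_one[of q] assms
    by (metis coprime_mod_left_iff of_nat_0_eq_iff not_numeral_le_zero z_def)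
  then show ?thesis
    using SOS unfolding SOS_period_def by auto
qed

end
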